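(* For every $\mathfrak{r}\in L^2(\mathfrak{B})$ there exists a unique $\mathfrak{p}_h\in\mathfrak{L}^2_h$ such that $$(\mathfrak{D}_h\mathfrak{p}_h,\mathfrak{D}_h\mathfrak{w}_h)_{\mathfrak{K}^{-1},h}=(\mathfrak{r},\mathfrak{w}_h)\qquad\forall\,\mathfrak{w}_h\in\mathfrak{L}^2_h.$$
   Context: Standing setting. $\Omega\subset\mathbb{R}^n$ ($n\in\{2,3\}$) is a bounded connected polygonal/polyhedral domain with outward normal $\bm{n}$. $\mathcal{F}$ is a finite collection (forest) of pairwise disjoint finite rooted trees, each with at least two nodes; $\mathcal{N}$ is the set of all nodes and $\mathcal{E}$ the set of all edges. Each tree has exactly one root, and the root has exactly one neighbour. The nodes are partitioned into root nodes $\mathcal{N}_R$, interior nodes $\mathcal{N}_I$ (non-root nodes of degree $\ge2$) and terminal nodes $\mathcal{N}_T$ (non-root nodes of degree $1$); $\mathcal{N}_R=\mathcal{N}_D\sqcup\mathcal{N}_N$ (Dirichlet and Neumann roots), $\mathcal{N}_D\neq\emptyset$. For a node $i$, $\mathcal{N}_i$ is its set of neighbours; for $i\in\mathcal{N}_R\cup\mathcal{N}_T$ its unique neighbour is also denoted $\mathcal{N}_i$. Edges are oriented away from the root; $e(i,j)$ is the edge oriented from $i$ to $j$. A network flux is $q^N\in\mathbb{R}^{\mathcal{E}}$, written $q^N_{i,j}$ for $e(i,j)$, with $q^N_{j,i}:=-q^N_{i,j}$. $k^N_e>0$ for $e\in\mathcal{E}$. $\mathcal{M}$ is a conforming, shape-regular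 mesh of $\Omega$ of mesh size $h$, consisting of simplices or of rectangles/rectangular cuboids. For each $i\in\mathcal{N}_T$: $B_i\subseteq\Omega$ is a union of elements of $\mathcal{M}$ ($\mathcal{M}_i$ the elements contained in $B_i$), and $k_i^S:\Omega\to[0,C_{k^S}]$ vanishes outside $B_i$, is constant on each element of $\mathcal{M}$, and satisfies $\int_{B_i}k_i^S\,\mathrm{d}\bm{x}\ge c_{k^S}>0$. The permeability is $k^D=\kappa_\tau I$ on each $\tau\in\mathcal{M}$ with constants $\kappa_\tau>0$. $L^2(\mathfrak{B}):=L^2(\Omega)\times\ell^2(\mathcal{N}\setminus\mathcal{N}_D)$ with inner product $(\mathfrak{p},\mathfrak{w}):=\int_\Omega p^Dw^D+\sum_{i\in\mathcal{N}\setminus\mathcal{N}_D}p_i^Nw_i^N$. $H_h(\operatorname{div},\mathcal{M})$ is the lowest-order Raviart–Thomas space, $H_{h,0}(\operatorname{div},\mathcal{M})$ its subspace with zero normal component on $\partial\Omega$, $P_0$ = piecewise constants; $H_{h,0}(\operatorname{div},\mathfrak{B}):=H_{h,0}(\operatorname{div},\mathcal{M})\times\prod_{i\in\mathcal{N}_T}P_0(\mathcal{M}_i)\times\mathbb{R}^{\mathcal{E}}$ and $\mathfrak{L}^2_h:=P_0(\mathcal{M})\times\ell^2(\mathcal{N}\setminus\mathcal{N}_D)$. For $\mathfrak{q}=[\bm{q}^D,q^S,q^N]$, $\mathfrak{D}\cdot\mathfrak{q}:=[u^D,u^N]$ with $u^D=\nabla\cdot\bm{q}^D-\sum_{i\in\mathcal{N}_T}k_i^Sq_i^S$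 ($q_i^S$ extended by zero outside $B_i$), $u_i^N=-\sum_{j\in\mathcal{N}_i}q^N_{j,i}$ ($i\in\mathcal{N}_I\cup\mathcal{N}_N$), $u_i^N=\int_{B_i}k_i^Sq_i^S-q^N_{\mathcal{N}_i,i}$ ($i\in\mathcal{N}_T$). Lumped inner product: for $\tau\in\mathcal{M}$ and a face $f$ of $\tau$ let $\bm{n}_f$ be the outward unit normal, $|f|$ the $(n-1)$-measure, $d_f$ the distance from $f$ to the barycenter of $\tau$, $Q_f(\bm{v}):=\int_f\bm{v}\cdot\bm{n}_f\,\mathrm{d}s$, $\omega_f:=\kappa_\tau^{-1}d_f/|f|$. Then $(\mathfrak{q}_h,\mathfrak{v}_h)_{\mathfrak{K}^{-1},h}:=\sum_{\tau\in\mathcal{M}}\sum_{f\subset\partial\tau}\omega_fQ_f(\bm{q}^D)Q_f(\bm{v}^D)+\sum_{i\in\mathcal{N}_T}\int_{B_i}q_i^Sv_i^S+\sum_{e\in\mathcal{E}}(k^N_e)^{-1}q^N_ev^N_e$. Discrete gradient: $\mathfrak{D}_h:\mathfrak{L}^2_h\to H_{h,0}(\operatorname{div},\mathfrak{B})$ is the linear map defined by $(\mathfrak{D}_h\mathfrak{p}_h,\mathfrak{v}_h)_{\mathfrak{K}^{-1},h}=-(\mathfrak{p}_h,\mathfrak{D}\cdot\mathfrak{v}_h)$ for all $\mathfrak{v}_h\in H_{h,0}(\operatorname{div},\mathfrak{B})$. (The TPFA problem is obtained from the mass-lumped mixed system by eliminating the flux $\mathfrak{q}_h=-\mathfrak{D}_h\mathfrak{p}_h$.)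 *)

theory Defs
  imports "HOL-Analysis.Analysis"
begin

text \<open>Elements of the mesh are subsets of the Euclidean space 'a; faces are abstract
 objects of type 'f (the lowest-order Raviart-Thomas space is represented by its face
 flux degrees of freedom); network nodes have type 'n.  The forest is encoded by a parent
 map: edge e(parent j, j) for every non-root node j (edges oriented away from the root).\<close>

record ('a, 'f, 'n) setting =
  elems  :: "'a set set"
  mfaces :: "'f set"
  fcs    :: "'a set \<Rightarrow> 'f set"
  osgn   :: "'a set \<Rightarrow> 'f \<Rightarrow> real" \<comment> \<open>+1/-1: n_f(tau) = osgn tau f * global normal of f\<close>
  farea  :: "'f \<Rightarrow> real"
  fdist  :: "'a set \<Rightarrow> 'f \<Rightarrow> real" \<comment> \<open>d_f (distance of f to the barycenter of tau)\<close>
  kappa  :: "'a set \<Rightarrow> real"        \<comment> \<open>k^D = kappa_tau I on tau\<close>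
  nodes  :: "'n set"
  roots  :: "'n set"
  droots :: "'n set"
  par    :: "'n \<Rightarrow> 'n"
  Msub   :: "'n \<Rightarrow> 'a set set"
  kS     :: "'n \<Rightarrow> 'a set \<Rightarrow> real" \<comment> \<open>element values of k_i^S\<close>
  kN     :: "'n \<times> 'n \<Rightarrow> real"

definition Omega :: "('a, 'f, 'n) setting \<Rightarrow> 'a set" where
  "Omega S = \<Union> (elems S)"

definition cells :: "('a, 'f, 'n) setting \<Rightarrow> 'f \<Rightarrow> 'a set set" where
  "cells S f = {\<tau> \<in> elems S. f \<in> fcs S \<tau>}"

definition bfaces :: "('a, 'f, 'n) setting \<Rightarrow> 'f set" where
  "bfaces S = {f \<in> mfaces S. card (cells S f) = 1}"

definition nbrs :: "('a, 'f, 'n) setting \<Rightarrow> 'n \<Rightarrow> 'n set" where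
  "nbrs S i = {j \<in> nodes S - roots S. par S j = i} \<union> (if i \<in> roots S then {} else {par S i})"

definition edges :: "('a, 'f, 'n) setting \<Rightarrow> ('n \<times> 'n) set" where
  "edges S = {(par S j, j) | j. j \<in> nodes S - roots S}"

definition inodes :: "('a, 'f, 'n) setting \<Rightarrow> 'n set" where
  "inodes S = {i \<in> nodes S - roots S. card (nbrs S i) \<ge> 2}"

definition tnodes :: "('a, 'f, 'n) setting \<Rightarrow> 'n set" where
  "tnodes S = {i \<in> nodes S - roots S. card (nbrs S i) = 1}"

definition B :: "('a, 'f, 'n) setting \<Rightarrow> 'n \<Rightarrow> 'a set" where
  "B S i = \<Union> (Msub S i)"

definition pc :: "('a::euclidean_space, 'f, 'n) setting \<Rightarrow> ('a set \<Rightarrow> real) \<Rightarrow> 'a \<Rightarrow> real" where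
  "pc S w x = (\<Sum>\<tau>\<in>elems S. w \<tau> * indicator \<tau> x)"

definition rooted_forest :: "('a, 'f, 'n) setting \<Rightarrow> bool" where
  "rooted_forest S \<longleftrightarrow>
     finite (nodes S) \<and> roots S \<subseteq> nodes S \<and>
     (\<forall>j \<in> nodes S - roots S. par S j \<in> nodes S) \<and>
     (\<forall>j \<in> nodes S. \<exists>k. (par S ^^ k) j \<in> roots S) \<and>
     (\<forall>r \<in> roots S. card {j \<in> nodes S - roots S. par S j = r} = 1) \<and>
     droots S \<subseteq> roots S \<and> droots S \<noteq> {}"

definition mesh_ok :: "('a::euclidean_space, 'f, 'n) setting \<Rightarrow> bool" where
  "mesh_ok S \<longleftrightarrow>
     DIM('a) \<in> {2, 3} \<and>
     finite (elems S) \<and> elems S \<noteq> {} \<and>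
     (\<forall>\<tau> \<in> elems S. compact \<tau> \<and> measure lebesgue \<tau> > 0 \<and> kappa S \<tau> > 0) \<and>
     (\<forall>\<tau>1 \<in> elems S. \<forall>\<tau>2 \<in> elems S. \<tau>1 \<noteq> \<tau>2 \<longrightarrow> \<tau>1 \<inter> \<tau>2 \<in> null_sets lebesgue) \<and>
     finite (mfaces S) \<and>
     (\<forall>\<tau> \<in> elems S. fcs S \<tau> \<subseteq> mfaces S) \<and>
     (\<forall>\<tau> \<in> elems S. \<forall>f \<in> fcs S \<tau>. osgn S \<tau> f \<in> {-1, 1} \<and> fdist S \<tau> f > 0) \<and>
     (\<forall>f \<in> mfaces S. farea S f > 0 \<and> 1 \<le> card (cells S f) \<and> card (cells S f) \<le> 2) \<and>
     (\<forall>f \<in> mfaces S. \<forall>\<tau>1 \<in> cells S f. \<forall>\<tau>2 \<in> cells S f.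
         \<tau>1 \<noteq> \<tau>2 \<longrightarrow> osgn S \<tau>1 f = - osgn S \<tau>2 f) \<and>
     (\<forall>\<tau>1 \<in> elems S. \<forall>\<tau>2 \<in> elems S.
         (\<tau>1, \<tau>2) \<in> {(a, b). a \<in> elems S \<and> b \<in> elems S \<and> fcs S a \<inter> fcs S b \<noteq> {}}\<^sup>*)"

definition coupling_ok :: "('a::euclidean_space, 'f, 'n) setting \<Rightarrow> bool" where
  "coupling_ok S \<longleftrightarrow>
     (\<exists>C c. c > 0 \<and>
       (\<forall>i \<in> tnodes S.
          Msub S i \<subseteq> elems S \<and>
          (\<forall>\<tau>. 0 \<le> kS S i \<tau> \<and> kS S i \<tau> \<le> C) \<and>
          (\<forall>\<tau>. \<tau> \<notin> Msub S i \<longrightarrow> kS S i \<tau> = 0) \<and>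
          set_lebesgue_integral lebesgue (B S i) (pc S (kS S i)) \<ge> c)) \<and>
     (\<forall>e \<in> edges S. kN S e > 0)"

definition setting_ok :: "('a::euclidean_space, 'f, 'n) setting \<Rightarrow> bool" where
  "setting_ok S \<longleftrightarrow> rooted_forest S \<and> mesh_ok S \<and> coupling_ok S"

type_synonym ('a, 'f, 'n) dflux = "('f \<Rightarrow> real) \<times> ('n \<Rightarrow> 'a set \<Rightarrow> real) \<times> ('n \<times> 'n \<Rightarrow> real)"
type_synonym ('a, 'n) dpres = "('a set \<Rightarrow> real) \<times> ('n \<Rightarrow> real)"

text \<open>H_{h,0}(div, B): RT fluxes (face degrees of freedom, zero on boundary faces),
 piecewise constants on M_i for terminal i, and edge fluxes.\<close>
definition Hh0 :: "('a, 'f, 'n) setting \<Rightarrow> ('a, 'f, 'n) dflux set" where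
  "Hh0 S = {(qD, qS, qN).
      (\<forall>f. f \<notin> mfaces S - bfaces S \<longrightarrow> qD f = 0) \<and>
      (\<forall>i \<tau>. \<not> (i \<in> tnodes S \<and> \<tau> \<in> Msub S i) \<longrightarrow> qS i \<tau> = 0) \<and>
      (\<forall>e. e \<notin> edges S \<longrightarrow> qN e = 0)}"

definition Lh :: "('a, 'f, 'n) setting \<Rightarrow> ('a, 'n) dpres set" where
  "Lh S = {(pD, pN). (\<forall>\<tau>. \<tau> \<notin> elems S \<longrightarrow> pD \<tau> = 0) \<and>
                      (\<forall>i. i \<notin> nodes S - droots S \<longrightarrow> pN i = 0)}"

definition ipB :: "('a::euclidean_space, 'f, 'n) setting \<Rightarrow> ('a \<Rightarrow> real) \<times> ('n \<Rightarrow> real)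
                   \<Rightarrow> ('a \<Rightarrow> real) \<times> ('n \<Rightarrow> real) \<Rightarrow> real" where
  "ipB S r w = set_lebesgue_integral lebesgue (Omega S) (\<lambda>x. fst r x * fst w x)
              + (\<Sum>i \<in> nodes S - droots S. snd r i * snd w i)"

definition emb :: "('a::euclidean_space, 'f, 'n) setting \<Rightarrow> ('a, 'n) dpres \<Rightarrow> ('a \<Rightarrow> real) \<times> ('n \<Rightarrow> real)" where
  "emb S p = (pc S (fst p), snd p)"

text \<open>Q_f(v) for the face f of tau (outward normal of tau), and the RT divergence on tau
 (constant, equal to |tau|^{-1} times the outward flux by the divergence theorem).\<close>
definition Qf :: "('a, 'f, 'n) setting \<Rightarrow> 'a set \<Rightarrow> 'f \<Rightarrow> ('f \<Rightarrow> real) \<Rightarrow> real" where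
  "Qf S \<tau> f v = osgn S \<tau> f * v f"

definition divRT :: "('a::euclidean_space, 'f, 'n) setting \<Rightarrow> ('f \<Rightarrow> real) \<Rightarrow> 'a set \<Rightarrow> real" where
  "divRT S v \<tau> = (\<Sum>f \<in> fcs S \<tau>. Qf S \<tau> f v) / measure lebesgue \<tau>"

definition flx :: "('a, 'f, 'n) setting \<Rightarrow> ('n \<times> 'n \<Rightarrow> real) \<Rightarrow> 'n \<Rightarrow> 'n \<Rightarrow> real" where
  "flx S qN j i = (if (j, i) \<in> edges S then qN (j, i)
                   else if (i, j) \<in> edges S then - qN (i, j) else 0)"

definition divB :: "('a::euclidean_space, 'f, 'n) setting \<Rightarrow> ('a, 'f, 'n) dflux \<Rightarrow> ('a, 'n) dpres" where
  "divB S q = (case q of (qD, qS, qN) \<Rightarrow>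
     (\<lambda>\<tau>. divRT S qD \<tau> - (\<Sum>i \<in> tnodes S. kS S i \<tau> * qS i \<tau>),
      \<lambda>i. if i \<in> tnodes S
          then set_lebesgue_integral lebesgue (B S i) (\<lambda>x. pc S (kS S i) x * pc S (qS i) x)
               - flx S qN (par S i) i
          else - (\<Sum>j \<in> nbrs S i. flx S qN j i)))"

definition lumped :: "('a::euclidean_space, 'f, 'n) setting \<Rightarrow> ('a, 'f, 'n) dflux \<Rightarrow> ('a, 'f, 'n) dflux \<Rightarrow> real" where
  "lumped S q v = (case q of (qD, qS, qN) \<Rightarrow> case v of (vD, vS, vN) \<Rightarrow>
     (\<Sum>\<tau> \<in> elems S. \<Sum>f \<in> fcs S \<tau>.
         (fdist S \<tau> f / (kappa S \<tau> * farea S f)) * Qf S \<tau> f qD * Qf S \<tau> f vD)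
     + (\<Sum>i \<in> tnodes S. set_lebesgue_integral lebesgue (B S i) (\<lambda>x. pc S (qS i) x * pc S (vS i) x))
     + (\<Sum>e \<in> edges S. qN e * vN e / kN S e))"

definition Dh :: "('a::euclidean_space, 'f, 'n) setting \<Rightarrow> ('a, 'n) dpres \<Rightarrow> ('a, 'f, 'n) dflux" where
  "Dh S p = (THE q. q \<in> Hh0 S \<and>
               (\<forall>v \<in> Hh0 S. lumped S q v = - ipB S (emb S p) (emb S (divB S v))))"

definition L2Omega :: "('a::euclidean_space, 'f, 'n) setting \<Rightarrow> ('a \<Rightarrow> real) \<Rightarrow> bool" where
  "L2Omega S g \<longleftrightarrow> g \<in> borel_measurable lebesgue \<and>
                    set_integrable lebesgue (Omega S) (\<lambda>x. (g x)^2)"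

end

theory Submission
  imports Defs "HOL-Library.Function_Algebras"
begin

text \<open>The discrete problem is a symmetric system on the finite-dimensional space \<open>Lh S\<close>, so by
  the finite-dimensional Riesz representation theorem (proved below by induction over a spanning
  set, eliminating one direction at a time through a Schur complement) it suffices that the form
  \<open>(Dh p, Dh p)\<close> is positive for \<open>p \<noteq> 0\<close>. The lumped product is a positively weighted sum
  of squares of the flux degrees of freedom, so \<open>Dh\<close> is well defined and linear, and \<open>Dh p = 0\<close>
  means that \<open>p\<close> is orthogonal to the divergence of every discrete flux. Testing with unit
  fluxes shows that such a \<open>p\<close> is constant across interior faces, hence on the connected mesh,
  equal at a terminal node to the cells it is coupled to, and constant along network edges.
  Every non-root node lies above a terminal node, and the value at a Dirichlet root is zero,
  so \<open>p = 0\<close>.\<close>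

text \<open>Pointwise vector space structure on functions, so that discrete pressures and fluxes (tuples
  of functions) form real vector spaces.\<close>

instantiation "fun" :: (type, real_vector) real_vector
begin

definition scaleR_fun :: "real \<Rightarrow> ('a \<Rightarrow> 'b) \<Rightarrow> 'a \<Rightarrow> 'b" where
  "scaleR_fun c f = (\<lambda>x. c *\<^sub>R f x)"

instance
  by standard (simp_all add: scaleR_fun_def fun_eq_iff scaleR_add_right scaleR_add_left)

end

lemma scaleR_fun_apply [simp]: "(c *\<^sub>R f) x = c *\<^sub>R f x"
  by (simp add: scaleR_fun_def)

section \<open>Finite-dimensional Riesz representation\<close>

lemma bilinear_schur_complement:
  fixes a :: "'v::real_vector \<Rightarrow> 'v \<Rightarrow> real"
  assumes "bilinear a"
  shows "bilinear (\<lambda>x y. a x y - a x e * a e y / a e e)"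
  using assms unfolding bilinear_def linear_iff
  by (simp add: algebra_simps add_divide_distrib diff_divide_distrib)

lemma bilinear_schur_identity:
  fixes a :: "'v::real_vector \<Rightarrow> 'v \<Rightarrow> real"
  assumes "bilinear a" "\<And>x y. a x y = a y x" "a e e \<noteq> 0"
  shows "a (x - (a x e / a e e) *\<^sub>R e) (x - (a x e / a e e) *\<^sub>R e) = a x x - a x e * a e x / a e e"
  using assms(3)
  by (simp add: bilinear_lsub[OF assms(1)] bilinear_rsub[OF assms(1)] bilinear_lmul[OF assms(1)]
      bilinear_rmul[OF assms(1)] assms(2)[of e x] field_simps power2_eq_square)

lemma schur_complement_pos:
  fixes a :: "'v::real_vector \<Rightarrow> 'v \<Rightarrow> real"
  assumes a: "bilinear a" "\<And>x y. a x y = a y x"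
    and pos: "\<And>x. x \<in> span (insert e U) \<Longrightarrow> x \<noteq> 0 \<Longrightarrow> 0 < a x x"
    and e: "e \<notin> span U" and x: "x \<in> span U" "x \<noteq> 0"
  shows "0 < a x x - a x e * a e x / a e e"
proof -
  define s where "s = a x e / a e e"
  have "e \<noteq> 0" using e span_zero by blast
  then have ee: "a e e \<noteq> 0" using pos[of e] span_base[of e] by fastforce
  have "x - s *\<^sub>R e \<noteq> 0"
  proof
    assume "x - s *\<^sub>R e = 0"
    then have "e = (1 / s) *\<^sub>R x" using x(2) by auto
    then show False using e span_scale[OF x(1)] by metis
  qed
  moreover have "x - s *\<^sub>R e \<in> span (insert e U)"
    using x(1) by (meson span_base span_diff span_mono span_scale subset_insertI insertI1 in_mono)
  ultimately have "0 < a (x - s *\<^sub>R e) (x - s *\<^sub>R e)" using pos by blast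
  then show ?thesis using bilinear_schur_identity[OF a ee] by (simp add: s_def)
qed

text \<open>Adjoining a direction \<open>e\<close> to the spanning set: a solution \<open>p'\<close> of the problem on
  \<open>span U\<close> for the Schur complement of \<open>a\<close> with respect to \<open>e\<close> is corrected by a multiple of
  \<open>e\<close> to a solution on \<open>span (insert e U)\<close>.\<close>
lemma bilinear_representation_insert:
  fixes a :: "'v::real_vector \<Rightarrow> 'v \<Rightarrow> real"
  assumes a: "bilinear a" and l: "linear l" and ee: "a e e \<noteq> 0" and p': "p' \<in> span U"
    and p'_eq: "\<And>w. w \<in> span U \<Longrightarrow> a p' w - a p' e * a e w / a e e = l w - l e * a e w / a e e"
  defines "p \<equiv> p' + ((l e - a p' e) / a e e) *\<^sub>R e"
  shows "p \<in> span (insert e U)" "\<forall>w\<in>span (insert e U). a p w = l w"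
proof -
  show "p \<in> span (insert e U)"
    using p' unfolding p_def by (meson span_add span_base span_mono span_scale subset_insertI insertI1 in_mono)
  have pe: "a p e = l e"
    using ee by (simp add: p_def bilinear_ladd[OF a] bilinear_lmul[OF a] field_simps)
  have pU: "a p w = l w" if "w \<in> span U" for w
    using p'_eq[OF that] ee by (simp add: p_def bilinear_ladd[OF a] bilinear_lmul[OF a] field_simps)
  show "\<forall>w\<in>span (insert e U). a p w = l w"
  proof
    fix w assume "w \<in> span (insert e U)"
    then obtain k where k: "w - k *\<^sub>R e \<in> span U" using span_breakdown_eq by blast
    have "a p w = a p (w - k *\<^sub>R e) + k * a p e"
      by (simp add: bilinear_rsub[OF a] bilinear_rmul[OF a])
    also have "\<dots> = l w" using pU[OF k] pe l by (simp add: linear_diff linear_scale)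
    finally show "a p w = l w" .
  qed
qed

lemma bilinear_representation_span:
  fixes a :: "'v::real_vector \<Rightarrow> 'v \<Rightarrow> real"
  assumes "finite U" "bilinear a" "\<And>x y. a x y = a y x"
    and "\<And>x. x \<in> span U \<Longrightarrow> x \<noteq> 0 \<Longrightarrow> 0 < a x x" and "linear l"
  shows "\<exists>p\<in>span U. \<forall>w\<in>span U. a p w = l w"
  using assms
proof (induction U arbitrary: a l rule: finite_induct)
  case empty
  then show ?case using bilinear_lzero linear_0 by fastforce
next
  case (insert e U)
  note a = insert.prems(1,2) and pos = insert.prems(3) and l = insert.prems(4)
  show ?case
  proof (cases "e \<in> span U")
    case True
    then show ?thesis using insert.IH[OF a] pos l span_redundant by metis
  next
    case False
    have "e \<noteq> 0" using False span_zero by blast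
    then have "0 < a e e" using pos span_base by blast
    then have ee: "a e e \<noteq> 0" by simp
    have "\<exists>p'\<in>span U. \<forall>w\<in>span U.
            a p' w - a p' e * a e w / a e e = l w - l e * a e w / a e e"
    proof (rule insert.IH)
      show "bilinear (\<lambda>x y. a x y - a x e * a e y / a e e)" by (rule bilinear_schur_complement[OF a(1)])
      show "a x y - a x e * a e y / a e e = a y x - a y e * a e x / a e e" for x y
        using a(2)[of x y] a(2)[of x e] a(2)[of e y] by simp
      show "0 < a x x - a x e * a e x / a e e" if "x \<in> span U" "x \<noteq> 0" for x
        using schur_complement_pos[OF a pos False that] .
      show "linear (\<lambda>y. l y - l e * a e y / a e e)" using l a(1) unfolding bilinear_def linear_iff
        by (simp add: algebra_simps add_divide_distrib)
    qed
    then show ?thesis using bilinear_representation_insert[OF a(1) l ee] by meson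
  qed
qed

lemma bilinear_representation_unique:
  fixes a :: "'v::real_vector \<Rightarrow> 'v \<Rightarrow> real"
  assumes "subspace V" "bilinear a" "\<And>x. x \<in> V \<Longrightarrow> x \<noteq> 0 \<Longrightarrow> 0 < a x x"
    and "p \<in> V" "\<forall>w\<in>V. a p w = l w" "q \<in> V" "\<forall>w\<in>V. a q w = l w"
  shows "p = q"
proof -
  have d: "p - q \<in> V" using assms(1,4,6) by (rule subspace_diff)
  then have "a (p - q) (p - q) = 0" using assms(5,7) by (simp add: bilinear_lsub[OF assms(2)])
  then show ?thesis using assms(3)[OF d] by fastforce
qed

definition finitely_spanned :: "'v::real_vector set \<Rightarrow> bool" where
  "finitely_spanned V \<longleftrightarrow> (\<exists>U. finite U \<and> span U = V)"

lemma subspace_finitely_spanned: "finitely_spanned V \<Longrightarrow> subspace V"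
  unfolding finitely_spanned_def using subspace_span by blast

theorem riesz_representation_finitely_spanned:
  fixes a :: "'v::real_vector \<Rightarrow> 'v \<Rightarrow> real"
  assumes V: "finitely_spanned V" and a: "bilinear a" "\<And>x y. a x y = a y x"
    and pos: "\<And>x. x \<in> V \<Longrightarrow> x \<noteq> 0 \<Longrightarrow> 0 < a x x" and l: "linear l"
  shows "\<exists>!p. p \<in> V \<and> (\<forall>w\<in>V. a p w = l w)"
proof -
  obtain U where U: "finite U" "span U = V" using V by (auto simp: finitely_spanned_def)
  then obtain p where "p \<in> V" "\<forall>w\<in>V. a p w = l w"
    using bilinear_representation_span[OF U(1) a _ l] pos by blast
  then show ?thesis
    using bilinear_representation_unique[OF subspace_finitely_spanned[OF V] a(1) pos] by blast
qed

lemma finitely_spanned_Times: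
  assumes "finitely_spanned X" "finitely_spanned Y"
  shows "finitely_spanned (X \<times> Y)"
proof -
  obtain UX where UX: "finite UX" "span UX = X"
    using assms(1) unfolding finitely_spanned_def by blast
  obtain UY where UY: "finite UY" "span UY = Y"
    using assms(2) unfolding finitely_spanned_def by blast
  have "span (UX \<times> {0} \<union> {0} \<times> UY) = {x + y |x y. x \<in> X \<times> {0} \<and> y \<in> {0} \<times> Y}"
    unfolding span_Un span_Times_sing1 span_Times_sing2 UX(2) UY(2) ..
  also have "\<dots> = X \<times> Y"
  proof (intro equalityI subsetI)
    fix z assume "z \<in> X \<times> Y"
    then have "z = (fst z, 0) + (0, snd z)" "(fst z, 0) \<in> X \<times> {0}" "(0, snd z) \<in> {0} \<times> Y"
      by auto
    then show "z \<in> {x + y |x y. x \<in> X \<times> {0} \<and> y \<in> {0} \<times> Y}" by blast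
  qed auto
  finally show ?thesis
    using UX(1) UY(1) unfolding finitely_spanned_def by (metis finite_SigmaI finite.simps finite_Un)
qed

lemma finitely_spanned_UNIV_real: "finitely_spanned (UNIV :: real set)"
proof -
  have "span {1::real} = UNIV"
    using span_Basis[where 'a=real] by (simp add: Basis_real_def)
  then show ?thesis unfolding finitely_spanned_def by blast
qed

lemma sum_fun_apply: "(\<Sum>k\<in>I. f k) x = (\<Sum>k\<in>I. f k x)"
  by (induction I rule: infinite_finite_induct) auto

lemma finitely_spanned_supported:
  fixes V :: "'i \<Rightarrow> 'v::real_vector set"
  assumes "finite I" and V: "\<And>k. k \<in> I \<Longrightarrow> finitely_spanned (V k)"
  shows "finitely_spanned {f. \<forall>k. (k \<in> I \<longrightarrow> f k \<in> V k) \<and> (k \<notin> I \<longrightarrow> f k = 0)}"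
    (is "finitely_spanned ?F")
proof -
  obtain U where U: "\<And>k. k \<in> I \<Longrightarrow> finite (U k) \<and> span (U k) = V k"
    using V unfolding finitely_spanned_def by (metis (mono_tags))
  define G where "G = (\<Union>k\<in>I. (\<lambda>v. 0(k := v)) ` U k)"
  have "span G \<subseteq> ?F"
  proof (rule span_minimal)
    show "G \<subseteq> ?F"
    proof
      fix g assume "g \<in> G"
      then obtain k v where "k \<in> I" "v \<in> U k" "g = 0(k := v)" by (auto simp: G_def)
      then have "g k \<in> V k" using U[of k] span_base[of v "U k"] by simp
      with \<open>k \<in> I\<close> \<open>g = 0(k := v)\<close> show "g \<in> ?F" using U span_zero by auto
    qed
    have "subspace (V k)" if "k \<in> I" for k using U[OF that] subspace_span by metis
    then show "subspace ?F" by (auto simp: subspace_def)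
  qed
  moreover have "?F \<subseteq> span G"
  proof
    fix f assume f: "f \<in> ?F"
    have "0(k := f k) \<in> span G" if k: "k \<in> I" for k
    proof -
      have "linear (\<lambda>v. (0(k := v) :: 'i \<Rightarrow> 'v))" by (auto simp: linear_iff fun_eq_iff)
      then have "(\<lambda>v. 0(k := v)) ` span (U k) = span ((\<lambda>v. 0(k := v)) ` U k)"
        by (simp add: span_linear_image)
      also have "\<dots> \<subseteq> span G" unfolding G_def using k by (intro span_mono) blast
      finally have "(\<lambda>v. 0(k := v)) ` span (U k) \<subseteq> span G" .
      moreover have "f k \<in> span (U k)" using f k U[of k] by simp
      ultimately show ?thesis by blast
    qed
    moreover have "f = (\<Sum>k\<in>I. 0(k := f k))"
      using f assms(1) by (auto simp: fun_eq_iff sum_fun_apply sum.delta' cong: if_cong)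
    ultimately show "f \<in> span G" by (metis span_sum)
  qed
  ultimately have "span G = ?F" by (rule subset_antisym)
  moreover have "finite G" using assms(1) U by (simp add: G_def)
  ultimately show ?thesis unfolding finitely_spanned_def by blast
qed

lemma finitely_spanned_supported_real:
  "finite I \<Longrightarrow> finitely_spanned {f :: 'i \<Rightarrow> real. \<forall>k. k \<notin> I \<longrightarrow> f k = 0}"
  using finitely_spanned_supported[of I "\<lambda>_. UNIV"] finitely_spanned_UNIV_real by simp

lemma bilinear_compose_linear:
  assumes "bilinear a" "linear f"
  shows "bilinear (\<lambda>x y. a (f x) (f y))"
  using assms unfolding bilinear_def linear_iff by simp

section \<open>Piecewise constant integrals and explicit forms\<close>

lemma setting_okD:
  assumes "setting_ok S"
  shows "mesh_ok S" "rooted_forest S" "coupling_ok S"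
  using assms by (auto simp: setting_ok_def)

lemma mesh_okD:
  assumes "mesh_ok S"
  shows "finite (elems S)" "finite (mfaces S)"
    and "\<tau> \<in> elems S \<Longrightarrow> compact \<tau>"
    and "\<tau> \<in> elems S \<Longrightarrow> 0 < measure lebesgue \<tau>"
    and "\<tau> \<in> elems S \<Longrightarrow> 0 < kappa S \<tau>"
    and "\<tau> \<in> elems S \<Longrightarrow> \<sigma> \<in> elems S \<Longrightarrow> \<tau> \<noteq> \<sigma> \<Longrightarrow> \<tau> \<inter> \<sigma> \<in> null_sets lebesgue"
    and "\<tau> \<in> elems S \<Longrightarrow> fcs S \<tau> \<subseteq> mfaces S"
    and "\<tau> \<in> elems S \<Longrightarrow> f \<in> fcs S \<tau> \<Longrightarrow> osgn S \<tau> f \<in> {-1, 1}"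
    and "\<tau> \<in> elems S \<Longrightarrow> f \<in> fcs S \<tau> \<Longrightarrow> 0 < fdist S \<tau> f"
    and "f \<in> mfaces S \<Longrightarrow> 0 < farea S f"
    and "f \<in> mfaces S \<Longrightarrow> cells S f \<noteq> {}"
    and "f \<in> mfaces S \<Longrightarrow> card (cells S f) \<le> 2"
    and "f \<in> mfaces S \<Longrightarrow> \<tau> \<in> cells S f \<Longrightarrow> \<sigma> \<in> cells S f \<Longrightarrow> \<tau> \<noteq> \<sigma> \<Longrightarrow>
           osgn S \<tau> f = - osgn S \<sigma> f"
    and "\<tau> \<in> elems S \<Longrightarrow> \<sigma> \<in> elems S \<Longrightarrow>
           (\<tau>, \<sigma>) \<in> {(a, b). a \<in> elems S \<and> b \<in> elems S \<and> fcs S a \<inter> fcs S b \<noteq> {}}\<^sup>*"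
proof -
  show "finite (elems S)" "finite (mfaces S)" using assms unfolding mesh_ok_def by blast+
  have E: "\<forall>\<tau> \<in> elems S. compact \<tau> \<and> measure lebesgue \<tau> > 0 \<and> kappa S \<tau> > 0"
    and N: "\<forall>\<tau>1 \<in> elems S. \<forall>\<tau>2 \<in> elems S. \<tau>1 \<noteq> \<tau>2 \<longrightarrow> \<tau>1 \<inter> \<tau>2 \<in> null_sets lebesgue"
    and Fc: "\<forall>\<tau> \<in> elems S. fcs S \<tau> \<subseteq> mfaces S"
    and O: "\<forall>\<tau> \<in> elems S. \<forall>f \<in> fcs S \<tau>. osgn S \<tau> f \<in> {-1, 1} \<and> fdist S \<tau> f > 0"
    and F: "\<forall>f \<in> mfaces S. farea S f > 0 \<and> 1 \<le> card (cells S f) \<and> card (cells S f) \<le> 2"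
    and Sg: "\<forall>f \<in> mfaces S. \<forall>\<tau>1 \<in> cells S f. \<forall>\<tau>2 \<in> cells S f.
           \<tau>1 \<noteq> \<tau>2 \<longrightarrow> osgn S \<tau>1 f = - osgn S \<tau>2 f"
    and C: "\<forall>\<tau>1 \<in> elems S. \<forall>\<tau>2 \<in> elems S.
           (\<tau>1, \<tau>2) \<in> {(a, b). a \<in> elems S \<and> b \<in> elems S \<and> fcs S a \<inter> fcs S b \<noteq> {}}\<^sup>*"
    using assms unfolding mesh_ok_def by - (elim conjE; assumption)+
  show "\<tau> \<in> elems S \<Longrightarrow> compact \<tau>" "\<tau> \<in> elems S \<Longrightarrow> 0 < measure lebesgue \<tau>"
    "\<tau> \<in> elems S \<Longrightarrow> 0 < kappa S \<tau>" using E by blast+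
  show "\<tau> \<in> elems S \<Longrightarrow> \<sigma> \<in> elems S \<Longrightarrow> \<tau> \<noteq> \<sigma> \<Longrightarrow> \<tau> \<inter> \<sigma> \<in> null_sets lebesgue"
    using N by blast
  show "\<tau> \<in> elems S \<Longrightarrow> fcs S \<tau> \<subseteq> mfaces S" using Fc by blast
  show "\<tau> \<in> elems S \<Longrightarrow> f \<in> fcs S \<tau> \<Longrightarrow> osgn S \<tau> f \<in> {-1, 1}"
    "\<tau> \<in> elems S \<Longrightarrow> f \<in> fcs S \<tau> \<Longrightarrow> 0 < fdist S \<tau> f" using O by blast+
  show "f \<in> mfaces S \<Longrightarrow> 0 < farea S f" "f \<in> mfaces S \<Longrightarrow> card (cells S f) \<le> 2"
    using F by blast+
  show "f \<in> mfaces S \<Longrightarrow> cells S f \<noteq> {}" using F by (metis card.empty not_one_le_zero)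
  show "f \<in> mfaces S \<Longrightarrow> \<tau> \<in> cells S f \<Longrightarrow> \<sigma> \<in> cells S f \<Longrightarrow> \<tau> \<noteq> \<sigma> \<Longrightarrow>
      osgn S \<tau> f = - osgn S \<sigma> f" using Sg by blast
  show "\<tau> \<in> elems S \<Longrightarrow> \<sigma> \<in> elems S \<Longrightarrow>
      (\<tau>, \<sigma>) \<in> {(a, b). a \<in> elems S \<and> b \<in> elems S \<and> fcs S a \<inter> fcs S b \<noteq> {}}\<^sup>*"
    using C by blast
qed

lemma rooted_forestD:
  assumes "rooted_forest S"
  shows "finite (nodes S)" "droots S \<subseteq> roots S" "droots S \<noteq> {}"
    and "j \<in> nodes S - roots S \<Longrightarrow> par S j \<in> nodes S"
    and "j \<in> nodes S \<Longrightarrow> \<exists>k. (par S ^^ k) j \<in> roots S"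
    and "r \<in> roots S \<Longrightarrow> card {j \<in> nodes S - roots S. par S j = r} = 1"
  using assms unfolding rooted_forest_def by meson+

lemma coupling_okD:
  assumes "coupling_ok S" "i \<in> tnodes S"
  shows "Msub S i \<subseteq> elems S" "0 \<le> kS S i \<tau>"
    and "0 < set_lebesgue_integral lebesgue (B S i) (pc S (kS S i))"
proof -
  obtain c where "c > 0" and i: "Msub S i \<subseteq> elems S" "\<forall>\<tau>. 0 \<le> kS S i \<tau>"
    "\<forall>\<tau>. \<tau> \<notin> Msub S i \<longrightarrow> kS S i \<tau> = 0" "c \<le> set_lebesgue_integral lebesgue (B S i) (pc S (kS S i))"
    using assms unfolding coupling_ok_def by meson
  then show "Msub S i \<subseteq> elems S" "0 \<le> kS S i \<tau>"
    and "0 < set_lebesgue_integral lebesgue (B S i) (pc S (kS S i))" by auto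
qed

lemma coupling_ok_kN_pos: "coupling_ok S \<Longrightarrow> e \<in> edges S \<Longrightarrow> 0 < kN S e"
  by (simp add: coupling_ok_def)

lemma elem_lmeasurable: "mesh_ok S \<Longrightarrow> \<tau> \<in> elems S \<Longrightarrow> \<tau> \<in> lmeasurable"
  by (simp add: lmeasurable_compact mesh_okD(3))

lemma AE_in_at_most_one_elem:
  assumes "mesh_ok S"
  shows "AE x in lebesgue. \<forall>\<sigma>\<in>elems S. \<forall>\<tau>\<in>elems S. x \<in> \<sigma> \<longrightarrow> x \<in> \<tau> \<longrightarrow> \<sigma> = \<tau>"
proof -
  have "AE x in lebesgue. x \<in> \<sigma> \<longrightarrow> x \<in> \<tau> \<longrightarrow> \<sigma> = \<tau>" if "\<sigma> \<in> elems S" "\<tau> \<in> elems S" for \<sigma> \<tau>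
    using AE_not_in[OF mesh_okD(6)[OF assms that]] by (cases "\<sigma> = \<tau>") auto
  then show ?thesis by (intro AE_finite_allI mesh_okD(1)[OF assms]) auto
qed

lemma sum_indicator_single:
  fixes c :: "'a set \<Rightarrow> real"
  assumes "finite E" "\<sigma> \<in> E" "x \<in> \<sigma>" "\<forall>\<tau>\<in>E. x \<in> \<tau> \<longrightarrow> \<sigma> = \<tau>"
  shows "(\<Sum>\<tau>\<in>E. c \<tau> * indicator \<tau> x) = c \<sigma>"
proof -
  have "(\<Sum>\<tau>\<in>E. c \<tau> * indicator \<tau> x) = (\<Sum>\<tau>\<in>E. if \<sigma> = \<tau> then c \<tau> else 0)"
    using assms(3,4) by (intro sum.cong) (auto simp: indicator_def)
  then show ?thesis using assms(1,2) by simp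
qed

lemma sum_indicator_none:
  fixes c :: "'a set \<Rightarrow> real"
  assumes "\<forall>\<tau>\<in>E. x \<notin> \<tau>"
  shows "(\<Sum>\<tau>\<in>E. c \<tau> * indicator \<tau> x) = 0"
  using assms by (intro sum.neutral) simp

lemma indicator_Union_mult_sum_indicator:
  assumes "finite E" "T \<subseteq> E" "\<forall>\<sigma>\<in>E. \<forall>\<tau>\<in>E. x \<in> \<sigma> \<longrightarrow> x \<in> \<tau> \<longrightarrow> \<sigma> = \<tau>"
  shows "indicator (\<Union>T) x * (\<Sum>\<tau>\<in>E. c \<tau> * indicator \<tau> x) = (\<Sum>\<tau>\<in>T. c \<tau> * (indicator \<tau> x :: real))"
proof (cases "\<exists>\<sigma>\<in>T. x \<in> \<sigma>")
  case True
  then obtain \<sigma> where \<sigma>: "\<sigma> \<in> T" "x \<in> \<sigma>" by blast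
  have E: "\<sigma> \<in> E" "\<forall>\<tau>\<in>E. x \<in> \<tau> \<longrightarrow> \<sigma> = \<tau>" using assms(2,3) \<sigma> by blast+
  then have "\<forall>\<tau>\<in>T. x \<in> \<tau> \<longrightarrow> \<sigma> = \<tau>" using assms(2) by blast
  moreover have "finite T" using assms(1,2) finite_subset by blast
  ultimately have "(\<Sum>\<tau>\<in>T. c \<tau> * indicator \<tau> x) = c \<sigma>"
    using sum_indicator_single[of T \<sigma> x c] \<sigma> by blast
  moreover have "x \<in> \<Union>T" using \<sigma> by blast
  ultimately show ?thesis by (simp add: sum_indicator_single[OF assms(1) E(1) \<sigma>(2) E(2)])
next
  case False
  then have "x \<notin> \<Union>T" by blast
  with False show ?thesis using sum_indicator_none[of T x c] by simp
qed

lemma sum_indicator_mult_sum_indicator: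
  assumes "finite E" "\<forall>\<sigma>\<in>E. \<forall>\<tau>\<in>E. x \<in> \<sigma> \<longrightarrow> x \<in> \<tau> \<longrightarrow> \<sigma> = \<tau>"
  shows "(\<Sum>\<tau>\<in>E. p \<tau> * indicator \<tau> x) * (\<Sum>\<tau>\<in>E. u \<tau> * indicator \<tau> x)
       = (\<Sum>\<tau>\<in>E. (p \<tau> * u \<tau>) * (indicator \<tau> x :: real))"
proof (cases "\<exists>\<sigma>\<in>E. x \<in> \<sigma>")
  case True
  then obtain \<sigma> where \<sigma>: "\<sigma> \<in> E" "x \<in> \<sigma>" by blast
  then have "\<forall>\<tau>\<in>E. x \<in> \<tau> \<longrightarrow> \<sigma> = \<tau>" using assms(2) by blast
  from sum_indicator_single[OF assms(1) \<sigma> this] show ?thesis by simp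
next
  case False
  then show ?thesis using sum_indicator_none[of E x] by simp
qed

lemma borel_measurable_pc: "mesh_ok S \<Longrightarrow> pc S u \<in> borel_measurable lebesgue"
  unfolding pc_def by (intro borel_measurable_sum borel_measurable_times borel_measurable_const
      borel_measurable_indicator) (simp add: elem_lmeasurable fmeasurableD)

lemma set_integral_piecewise_const:
  assumes M: "mesh_ok S" and T: "T \<subseteq> elems S"
    and f: "f \<in> borel_measurable lebesgue"
    and f_eq: "AE x in lebesgue. f x = (\<Sum>\<tau>\<in>elems S. c \<tau> * indicator \<tau> x)"
  shows "set_lebesgue_integral lebesgue (\<Union>T) f = (\<Sum>\<tau>\<in>T. c \<tau> * measure lebesgue \<tau>)"
proof -
  have fin: "finite T" using mesh_okD(1)[OF M] T finite_subset by blast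
  have lm: "\<tau> \<in> lmeasurable" if "\<tau> \<in> T" for \<tau> using elem_lmeasurable[OF M] T that by blast
  have "set_lebesgue_integral lebesgue (\<Union>T) f = integral\<^sup>L lebesgue (\<lambda>x. \<Sum>\<tau>\<in>T. c \<tau> * indicator \<tau> x)"
    unfolding set_lebesgue_integral_def
  proof (rule integral_cong_AE)
    show "(\<lambda>x. indicator (\<Union>T) x *\<^sub>R f x) \<in> borel_measurable lebesgue"
      using f fin lm by (intro borel_measurable_scaleR borel_measurable_indicator) (auto simp: fmeasurableD)
    show "(\<lambda>x. \<Sum>\<tau>\<in>T. c \<tau> * indicator \<tau> x) \<in> borel_measurable lebesgue"
      using lm by (intro borel_measurable_sum borel_measurable_times borel_measurable_const
          borel_measurable_indicator) (auto simp: fmeasurableD)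
    show "AE x in lebesgue. indicator (\<Union>T) x *\<^sub>R f x = (\<Sum>\<tau>\<in>T. c \<tau> * indicator \<tau> x)"
      using f_eq AE_in_at_most_one_elem[OF M]
      by eventually_elim (simp add: indicator_Union_mult_sum_indicator[OF mesh_okD(1)[OF M] T])
  qed
  also have "\<dots> = (\<Sum>\<tau>\<in>T. c \<tau> * measure lebesgue \<tau>)"
  proof -
    have "integrable lebesgue (indicator \<tau> :: _ \<Rightarrow> real)" if "\<tau> \<in> T" for \<tau>
      using lm[OF that] by (auto simp: fmeasurable_def intro: integrable_real_indicator)
    then show ?thesis by (subst Bochner_Integration.integral_sum) auto
  qed
  finally show ?thesis .
qed

lemma set_integral_pc:
  "mesh_ok S \<Longrightarrow> T \<subseteq> elems S \<Longrightarrow>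
     set_lebesgue_integral lebesgue (\<Union>T) (pc S u) = (\<Sum>\<tau>\<in>T. u \<tau> * measure lebesgue \<tau>)"
  by (rule set_integral_piecewise_const) (auto simp: borel_measurable_pc pc_def)

lemma set_integral_pc_mult:
  assumes "mesh_ok S" "T \<subseteq> elems S"
  shows "set_lebesgue_integral lebesgue (\<Union>T) (\<lambda>x. pc S p x * pc S u x)
           = (\<Sum>\<tau>\<in>T. p \<tau> * u \<tau> * measure lebesgue \<tau>)"
proof (rule set_integral_piecewise_const[OF assms])
  show "(\<lambda>x. pc S p x * pc S u x) \<in> borel_measurable lebesgue"
    using borel_measurable_pc[OF assms(1)] by simp
  show "AE x in lebesgue. pc S p x * pc S u x = (\<Sum>\<tau>\<in>elems S. p \<tau> * u \<tau> * indicator \<tau> x)"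
    using AE_in_at_most_one_elem[OF assms(1)]
    by eventually_elim (simp add: pc_def sum_indicator_mult_sum_indicator[OF mesh_okD(1)[OF assms(1)]])
qed

lemma set_integral_B_pc_mult:
  "setting_ok S \<Longrightarrow> i \<in> tnodes S \<Longrightarrow>
     set_lebesgue_integral lebesgue (B S i) (\<lambda>x. pc S p x * pc S u x)
       = (\<Sum>\<tau>\<in>Msub S i. p \<tau> * u \<tau> * measure lebesgue \<tau>)"
  unfolding B_def by (intro set_integral_pc_mult) (simp_all add: setting_okD coupling_okD)

lemma lumped_eq:
  assumes "setting_ok S"
  shows "lumped S q v =
     (\<Sum>\<tau>\<in>elems S. \<Sum>f\<in>fcs S \<tau>.
         fdist S \<tau> f / (kappa S \<tau> * farea S f) * Qf S \<tau> f (fst q) * Qf S \<tau> f (fst v))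
     + (\<Sum>i\<in>tnodes S. \<Sum>\<tau>\<in>Msub S i. fst (snd q) i \<tau> * fst (snd v) i \<tau> * measure lebesgue \<tau>)
     + (\<Sum>e\<in>edges S. snd (snd q) e * snd (snd v) e / kN S e)"
  by (cases q, cases v) (simp add: lumped_def set_integral_B_pc_mult[OF assms] cong: sum.cong)

lemma divB_eq:
  assumes "setting_ok S"
  shows "divB S q =
     (\<lambda>\<tau>. divRT S (fst q) \<tau> - (\<Sum>i\<in>tnodes S. kS S i \<tau> * fst (snd q) i \<tau>),
      \<lambda>i. if i \<in> tnodes S
          then (\<Sum>\<tau>\<in>Msub S i. kS S i \<tau> * fst (snd q) i \<tau> * measure lebesgue \<tau>)
               - flx S (snd (snd q)) (par S i) i
          else - (\<Sum>j\<in>nbrs S i. flx S (snd (snd q)) j i))"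
  by (cases q) (auto simp: divB_def set_integral_B_pc_mult[OF assms] fun_eq_iff)

lemma ipB_emb_eq:
  assumes "mesh_ok S"
  shows "ipB S (emb S p) (emb S u) = (\<Sum>\<tau>\<in>elems S. fst p \<tau> * fst u \<tau> * measure lebesgue \<tau>)
           + (\<Sum>i\<in>nodes S - droots S. snd p i * snd u i)"
  unfolding ipB_def emb_def Omega_def using set_integral_pc_mult[OF assms, of "elems S"] by simp

lemma abs_le_square_plus_one: "\<bar>y\<bar> \<le> y\<^sup>2 + (1::real)"
  using zero_le_power2[of "\<bar>y\<bar> - 1/2"] by (simp add: power2_eq_square algebra_simps)

lemma set_integrable_mult_indicator_elem:
  assumes M: "mesh_ok S" and r: "L2Omega S rD" and \<tau>: "\<tau> \<in> elems S"
  shows "set_integrable lebesgue (Omega S) (\<lambda>x. rD x * indicator \<tau> x)"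
  unfolding set_integrable_def
proof (rule Bochner_Integration.integrable_bound)
  have Om: "Omega S \<in> sets lebesgue"
    unfolding Omega_def using M elem_lmeasurable[OF M] mesh_okD(1)[OF M] by (auto simp: fmeasurableD)
  have \<tau>m: "\<tau> \<in> sets lebesgue" "emeasure lebesgue \<tau> < \<infinity>"
    using elem_lmeasurable[OF M \<tau>] by (auto simp: fmeasurable_def)
  show "integrable lebesgue (\<lambda>x. indicator (Omega S) x *\<^sub>R (rD x)\<^sup>2 + indicator \<tau> x)"
    using r \<tau>m by (intro Bochner_Integration.integrable_add) (auto simp: L2Omega_def set_integrable_def)
  show "(\<lambda>x. indicator (Omega S) x *\<^sub>R (rD x * indicator \<tau> x)) \<in> borel_measurable lebesgue"
    using r Om \<tau>m by (intro borel_measurable_scaleR borel_measurable_times borel_measurable_indicator)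
      (auto simp: L2Omega_def)
  have "\<tau> \<subseteq> Omega S" using \<tau> by (auto simp: Omega_def)
  then show "AE x in lebesgue. norm (indicator (Omega S) x *\<^sub>R (rD x * indicator \<tau> x))
          \<le> norm (indicator (Omega S) x *\<^sub>R (rD x)\<^sup>2 + (indicator \<tau> x :: real))"
    using abs_le_square_plus_one by (intro AE_I2) (auto simp: indicator_def)
qed

lemma ipB_source_eq:
  assumes S: "setting_ok S" and r: "L2Omega S rD"
  shows "ipB S (rD, rN) (emb S w) =
     (\<Sum>\<tau>\<in>elems S. fst w \<tau> * set_lebesgue_integral lebesgue (Omega S) (\<lambda>x. rD x * indicator \<tau> x))
     + (\<Sum>i\<in>nodes S - droots S. rN i * snd w i)"
proof -
  note M = setting_okD(1)[OF S]
  have "set_lebesgue_integral lebesgue (Omega S) (\<lambda>x. rD x * pc S (fst w) x)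
     = integral\<^sup>L lebesgue (\<lambda>x. \<Sum>\<tau>\<in>elems S. fst w \<tau> * (indicator (Omega S) x *\<^sub>R (rD x * indicator \<tau> x)))"
    unfolding set_lebesgue_integral_def pc_def
    by (rule arg_cong[where f="integral\<^sup>L lebesgue"]) (auto simp: sum_distrib_left algebra_simps)
  also have "\<dots> = (\<Sum>\<tau>\<in>elems S. fst w \<tau> * set_lebesgue_integral lebesgue (Omega S) (\<lambda>x. rD x * indicator \<tau> x))"
    using set_integrable_mult_indicator_elem[OF M r] unfolding set_lebesgue_integral_def set_integrable_def
    by (subst Bochner_Integration.integral_sum) auto
  finally show ?thesis unfolding ipB_def emb_def by simp
qed

lemma bilinear_lumped:
  assumes "setting_ok S"
  shows "bilinear (lumped S)"
  unfolding bilinear_def linear_iff lumped_eq[OF assms] Qf_def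
  by (simp add: algebra_simps sum.distrib sum_distrib_left add_divide_distrib)

lemma lumped_commute: "setting_ok S \<Longrightarrow> lumped S q v = lumped S v q"
  by (simp add: lumped_eq algebra_simps)

lemma linear_divRT: "linear (\<lambda>qD. divRT S qD \<tau>)"
  unfolding linear_iff divRT_def Qf_def
  by (simp add: algebra_simps sum.distrib sum_distrib_left add_divide_distrib)

lemma linear_flx: "linear (\<lambda>qN. flx S qN j i)"
  unfolding linear_iff flx_def by simp

lemma divRT_zero [simp]: "divRT S 0 \<tau> = 0"
  by (simp add: divRT_def Qf_def)

lemma flx_zero [simp]: "flx S 0 j i = 0"
  by (simp add: flx_def)

lemma linear_divB:
  assumes "setting_ok S"
  shows "linear (divB S)"
  using linear_divRT[of S] linear_flx[of S]
  unfolding linear_iff divB_eq[OF assms]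
  by (simp add: algebra_simps sum.distrib sum_distrib_left fun_eq_iff)

lemma bilinear_ipB_emb:
  assumes "mesh_ok S"
  shows "bilinear (\<lambda>p u. ipB S (emb S p) (emb S u))"
  unfolding bilinear_def linear_iff ipB_emb_eq[OF assms]
  by (simp add: algebra_simps sum.distrib sum_distrib_left)

lemma linear_ipB_source:
  assumes "setting_ok S" "L2Omega S rD"
  shows "linear (\<lambda>w. ipB S (rD, rN) (emb S w))"
  unfolding linear_iff ipB_source_eq[OF assms]
  by (simp add: algebra_simps sum.distrib sum_distrib_left)

section \<open>The discrete gradient\<close>

lemma finitely_spanned_Lh:
  assumes "setting_ok S"
  shows "finitely_spanned (Lh S)"
proof -
  have "Lh S = {pD. \<forall>\<tau>. \<tau> \<notin> elems S \<longrightarrow> pD \<tau> = 0} \<times> {pN. \<forall>i. i \<notin> nodes S - droots S \<longrightarrow> pN i = 0}"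
    by (auto simp: Lh_def)
  also have "finitely_spanned \<dots>"
    using assms by (intro finitely_spanned_Times finitely_spanned_supported_real)
      (simp_all add: setting_okD mesh_okD rooted_forestD)
  finally show ?thesis .
qed

lemma finite_tnodes: "setting_ok S \<Longrightarrow> finite (tnodes S)"
  by (rule finite_subset[of _ "nodes S"]) (auto simp: tnodes_def setting_okD rooted_forestD)

lemma finite_Msub: "setting_ok S \<Longrightarrow> i \<in> tnodes S \<Longrightarrow> finite (Msub S i)"
  using coupling_okD(1)[OF setting_okD(3)] mesh_okD(1)[OF setting_okD(1)] finite_subset by metis

lemma finite_edges:
  assumes "setting_ok S" shows "finite (edges S)"
proof -
  have "edges S = (\<lambda>j. (par S j, j)) ` (nodes S - roots S)" by (auto simp: edges_def)
  then show ?thesis using rooted_forestD(1)[OF setting_okD(2)[OF assms]] by simp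
qed

lemma finitely_spanned_Hh0:
  assumes S: "setting_ok S"
  shows "finitely_spanned (Hh0 S)"
proof -
  let ?Src = "{qS. \<forall>i. (i \<in> tnodes S \<longrightarrow> qS i \<in> {g. \<forall>\<tau>. \<tau> \<notin> Msub S i \<longrightarrow> g \<tau> = (0::real)})
                      \<and> (i \<notin> tnodes S \<longrightarrow> qS i = 0)}"
  have src: "finitely_spanned ?Src"
  proof (rule finitely_spanned_supported)
    show "finite (tnodes S)" using S by (rule finite_tnodes)
    show "finitely_spanned {g. \<forall>\<tau>. \<tau> \<notin> Msub S i \<longrightarrow> g \<tau> = (0::real)}" if "i \<in> tnodes S" for i
      using finite_Msub[OF S that] by (rule finitely_spanned_supported_real)
  qed
  have "Hh0 S = {qD. \<forall>f. f \<notin> mfaces S - bfaces S \<longrightarrow> qD f = 0}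
                  \<times> (?Src \<times> {qN. \<forall>e. e \<notin> edges S \<longrightarrow> qN e = 0})"
    by (auto simp: Hh0_def fun_eq_iff)
  also have "finitely_spanned \<dots>"
    using S src by (intro finitely_spanned_Times finitely_spanned_supported_real)
      (simp_all add: finite_edges setting_okD mesh_okD)
  finally show ?thesis .
qed

lemma face_weight_pos:
  assumes M: "mesh_ok S" and "\<tau> \<in> elems S" "f \<in> fcs S \<tau>"
  shows "0 < fdist S \<tau> f / (kappa S \<tau> * farea S f)"
proof -
  have "f \<in> mfaces S" using mesh_okD(7)[OF M assms(2)] assms(3) by blast
  then show ?thesis using mesh_okD(5,9,10)[OF M] assms(2,3) by simp
qed

lemma lumped_self_eq:
  assumes S: "setting_ok S"
  shows "lumped S q q =
     (\<Sum>\<tau>\<in>elems S. \<Sum>f\<in>fcs S \<tau>. fdist S \<tau> f / (kappa S \<tau> * farea S f) * (fst q f)\<^sup>2)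
     + (\<Sum>i\<in>tnodes S. \<Sum>\<tau>\<in>Msub S i. (fst (snd q) i \<tau>)\<^sup>2 * measure lebesgue \<tau>)
     + (\<Sum>e\<in>edges S. (snd (snd q) e)\<^sup>2 / kN S e)"
proof -
  have "Qf S \<tau> f (fst q) * Qf S \<tau> f (fst q) = (fst q f)\<^sup>2" if "\<tau> \<in> elems S" "f \<in> fcs S \<tau>" for \<tau> f
    using mesh_okD(8)[OF setting_okD(1)[OF S] that] by (auto simp: Qf_def power2_eq_square)
  then show ?thesis
    unfolding lumped_eq[OF S] by (simp add: mult.assoc power2_eq_square cong: sum.cong)
qed

lemma lumped_pos:
  assumes S: "setting_ok S" and q: "q \<in> Hh0 S" "q \<noteq> 0"
  shows "0 < lumped S q q"
proof -
  note M = setting_okD(1)[OF S]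
  obtain qD qS qN where qq: "q = (qD, qS, qN)" by (cases q)
  have H: "\<And>f. f \<notin> mfaces S - bfaces S \<Longrightarrow> qD f = 0"
    "\<And>i \<tau>. \<not> (i \<in> tnodes S \<and> \<tau> \<in> Msub S i) \<Longrightarrow> qS i \<tau> = 0"
    "\<And>e. e \<notin> edges S \<Longrightarrow> qN e = 0" using q(1) qq by (auto simp: Hh0_def)
  define wt where "wt \<tau> f = fdist S \<tau> f / (kappa S \<tau> * farea S f)" for \<tau> f
  define A where "A = (\<Sum>\<tau>\<in>elems S. \<Sum>f\<in>fcs S \<tau>. wt \<tau> f * (qD f)\<^sup>2)"
  define B' where "B' = (\<Sum>i\<in>tnodes S. \<Sum>\<tau>\<in>Msub S i. (qS i \<tau>)\<^sup>2 * measure lebesgue \<tau>)"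
  define C where "C = (\<Sum>e\<in>edges S. (qN e)\<^sup>2 / kN S e)"
  have wt: "0 < wt \<tau> f" if "\<tau> \<in> elems S" "f \<in> fcs S \<tau>" for \<tau> f
    unfolding wt_def using face_weight_pos[OF M that] .
  have m: "0 < measure lebesgue \<tau>" if "i \<in> tnodes S" "\<tau> \<in> Msub S i" for i \<tau>
    using that coupling_okD(1)[OF setting_okD(3)[OF S]] mesh_okD(4)[OF M] by blast
  have kN: "0 < kN S e" if "e \<in> edges S" for e using that coupling_ok_kN_pos setting_okD(3)[OF S] by blast
  have fin_fcs: "finite (fcs S \<tau>)" if "\<tau> \<in> elems S" for \<tau>
    using finite_subset[OF mesh_okD(7)[OF M that] mesh_okD(2)[OF M]] .
  have wq: "0 \<le> wt \<tau> f * (qD f)\<^sup>2" if "\<tau> \<in> elems S" "f \<in> fcs S \<tau>" for \<tau> f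
    using wt[OF that] by simp
  have A: "0 \<le> A" unfolding A_def using wq by (intro sum_nonneg) auto
  have B': "0 \<le> B'" unfolding B'_def using m by (intro sum_nonneg mult_nonneg_nonneg) (auto intro: less_imp_le)
  have C: "0 \<le> C" unfolding C_def using kN by (intro sum_nonneg divide_nonneg_pos) auto
  consider (D) f where "qD f \<noteq> 0" | (Src) i \<tau> where "qS i \<tau> \<noteq> 0" | (N) e where "qN e \<noteq> 0"
  proof -
    have "qD \<noteq> 0 \<or> qS \<noteq> 0 \<or> qN \<noteq> 0" using q(2) qq by (auto simp: zero_prod_def)
    then show thesis using that by (auto simp: fun_eq_iff)
  qed
  then have "0 < A \<or> 0 < B' \<or> 0 < C"
  proof cases
    case D
    then obtain \<tau> where \<tau>: "\<tau> \<in> elems S" "f \<in> fcs S \<tau>"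
      using H(1) mesh_okD(11)[OF M] by (fastforce simp: cells_def)
    have "0 < (\<Sum>g\<in>fcs S \<tau>. wt \<tau> g * (qD g)\<^sup>2)"
      using \<tau> D wt[OF \<tau>] wq fin_fcs by (intro sum_pos2[of _ f]) auto
    then have "0 < A"
      unfolding A_def using \<tau>(1) mesh_okD(1)[OF M] wq by (intro sum_pos2[of _ \<tau>] sum_nonneg) auto
    then show ?thesis by blast
  next
    case Src
    then have i\<tau>: "i \<in> tnodes S" "\<tau> \<in> Msub S i" using H(2) by blast+
    have "0 < (\<Sum>\<sigma>\<in>Msub S i. (qS i \<sigma>)\<^sup>2 * measure lebesgue \<sigma>)"
      using i\<tau> Src m finite_Msub[OF S i\<tau>(1)] by (intro sum_pos2[of _ \<tau>]) (auto intro: less_imp_le)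
    then have "0 < B'"
      unfolding B'_def using i\<tau> m finite_tnodes[OF S]
      by (intro sum_pos2[of _ i] sum_nonneg mult_nonneg_nonneg) (auto intro: less_imp_le)
    then show ?thesis by blast
  next
    case N
    then have "0 < C"
      unfolding C_def using H(3) kN finite_edges[OF S]
      by (intro sum_pos2[of _ e] divide_nonneg_pos) fastforce+
    then show ?thesis by blast
  qed
  moreover have "lumped S q q = A + B' + C"
    unfolding lumped_self_eq[OF S] qq A_def B'_def C_def wt_def by simp
  ultimately show ?thesis using A B' C by linarith
qed

lemma ex1_discrete_gradient:
  assumes S: "setting_ok S"
  shows "\<exists>!q. q \<in> Hh0 S \<and> (\<forall>v\<in>Hh0 S. lumped S q v = - ipB S (emb S p) (emb S (divB S v)))"
proof (rule riesz_representation_finitely_spanned)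
  show "finitely_spanned (Hh0 S)" using S by (rule finitely_spanned_Hh0)
  show "bilinear (lumped S)" using S by (rule bilinear_lumped)
  show "lumped S q v = lumped S v q" for q v using S by (rule lumped_commute)
  show "0 < lumped S q q" if "q \<in> Hh0 S" "q \<noteq> 0" for q using lumped_pos[OF S that] .
  have "linear (\<lambda>u. ipB S (emb S p) (emb S u))"
    using bilinear_ipB_emb[OF setting_okD(1)[OF S]] unfolding bilinear_def by blast
  from linear_compose[OF linear_divB[OF S] this]
  have "linear (\<lambda>v. ipB S (emb S p) (emb S (divB S v)))" by (simp add: o_def)
  then show "linear (\<lambda>v. - ipB S (emb S p) (emb S (divB S v)))" by (rule linear_compose_neg)
qed

lemma Dh_char:
  assumes "setting_ok S"
  shows "Dh S p \<in> Hh0 S" "v \<in> Hh0 S \<Longrightarrow> lumped S (Dh S p) v = - ipB S (emb S p) (emb S (divB S v))"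
  using theI'[OF ex1_discrete_gradient[OF assms, of p]] unfolding Dh_def by blast+

lemma Dh_eqI:
  assumes "setting_ok S" "q \<in> Hh0 S" "\<And>v. v \<in> Hh0 S \<Longrightarrow> lumped S q v = - ipB S (emb S p) (emb S (divB S v))"
  shows "Dh S p = q"
  unfolding Dh_def using assms(2,3) by (intro the1_equality[OF ex1_discrete_gradient[OF assms(1)]]) blast

lemma linear_Dh:
  assumes S: "setting_ok S"
  shows "linear (Dh S)"
proof (rule linearI)
  note H = subspace_finitely_spanned[OF finitely_spanned_Hh0[OF S]]
  note L = bilinear_lumped[OF S] and I = bilinear_ipB_emb[OF setting_okD(1)[OF S]]
  show "Dh S (p + p') = Dh S p + Dh S p'" for p p'
    using H Dh_char[OF S] by (intro Dh_eqI[OF S]) (simp_all add: subspace_add bilinear_ladd[OF L] bilinear_ladd[OF I])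
  show "Dh S (c *\<^sub>R p) = c *\<^sub>R Dh S p" for c p
    using H Dh_char[OF S] by (intro Dh_eqI[OF S]) (simp_all add: subspace_scale bilinear_lmul[OF L] bilinear_lmul[OF I])
qed

section \<open>Rooted forests\<close>

abbreviation nonroots :: "('a, 'f, 'n) setting \<Rightarrow> 'n set" where
  "nonroots S \<equiv> nodes S - roots S"

lemma funpow_closed: "(\<And>x. x \<in> A \<Longrightarrow> f x \<in> A) \<Longrightarrow> j \<in> A \<Longrightarrow> (f ^^ k) j \<in> A"
  by (induction k) auto

lemma no_par_closed_nonroots:
  assumes R: "rooted_forest S" and A: "A \<subseteq> nonroots S" "\<And>x. x \<in> A \<Longrightarrow> par S x \<in> A" and j: "j \<in> A"
  shows False
proof -
  obtain k where "(par S ^^ k) j \<in> roots S" using rooted_forestD(5)[OF R] j A by blast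
  moreover have "(par S ^^ k) j \<in> A" using funpow_closed[of A "par S", OF A(2) j] .
  ultimately show False using A by blast
qed

lemma par_neq_self: "rooted_forest S \<Longrightarrow> j \<in> nonroots S \<Longrightarrow> par S j \<noteq> j"
  using no_par_closed_nonroots[of S "{j}" j] by auto

lemma par_par_neq_self:
  "rooted_forest S \<Longrightarrow> j \<in> nonroots S \<Longrightarrow> par S j \<in> nonroots S \<Longrightarrow> par S (par S j) \<noteq> j"
  using no_par_closed_nonroots[of S "{j, par S j}" j] by auto

definition depth :: "('a, 'f, 'n) setting \<Rightarrow> 'n \<Rightarrow> nat" where
  "depth S j = (LEAST k. (par S ^^ k) j \<in> roots S)"

lemma depth_par:
  assumes R: "rooted_forest S" and j: "j \<in> nonroots S"
  shows "depth S j = Suc (depth S (par S j))"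
proof -
  obtain K where K: "(par S ^^ K) (par S j) \<in> roots S"
    using rooted_forestD(4,5)[OF R] j by blast
  have par_pow: "(par S ^^ Suc k) j = (par S ^^ k) (par S j)" for k
    by (simp add: funpow_Suc_right del: funpow.simps)
  have "(par S ^^ Suc (depth S (par S j))) j \<in> roots S"
    unfolding par_pow depth_def using K by (rule LeastI)
  then have le: "depth S j \<le> Suc (depth S (par S j))" unfolding depth_def by (rule Least_le)
  have dj: "(par S ^^ depth S j) j \<in> roots S"
    unfolding depth_def by (rule LeastI[of _ "Suc K"]) (use K in \<open>simp only: par_pow\<close>)
  then obtain m where m: "depth S j = Suc m" using j by (cases "depth S j") auto
  then have "(par S ^^ m) (par S j) \<in> roots S" using dj by (simp only: m par_pow)
  then have "depth S (par S j) \<le> m" unfolding depth_def by (rule Least_le)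
  then show ?thesis using le m by simp
qed

text \<open>A descendant of maximal depth has no children, so it is terminal.\<close>
lemma exists_terminal_descendant:
  assumes R: "rooted_forest S" and j0: "j0 \<in> nonroots S"
  shows "\<exists>t\<in>tnodes S. \<exists>k. (par S ^^ k) t = j0 \<and> (\<forall>i\<le>k. (par S ^^ i) t \<in> nonroots S)"
proof -
  define Y where "Y = {t \<in> nonroots S. \<exists>k. (par S ^^ k) t = j0 \<and> (\<forall>i\<le>k. (par S ^^ i) t \<in> nonroots S)}"
  have finY: "finite Y" using rooted_forestD(1)[OF R] by (auto simp: Y_def)
  have "j0 \<in> Y" using j0 by (auto simp: Y_def intro!: exI[of _ 0])
  then have "Max (depth S ` Y) \<in> depth S ` Y" using finY by (intro Max_in) auto
  then obtain t where tY: "t \<in> Y" and "depth S t = Max (depth S ` Y)" by auto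
  then have max: "depth S y \<le> depth S t" if "y \<in> Y" for y using finY that by simp
  obtain k where k: "(par S ^^ k) t = j0" "\<forall>i\<le>k. (par S ^^ i) t \<in> nonroots S"
    and t: "t \<in> nonroots S" using tY by (auto simp: Y_def)
  have no_child: "{j \<in> nonroots S. par S j = t} = {}"
  proof (rule ccontr)
    assume "{j \<in> nonroots S. par S j = t} \<noteq> {}"
    then obtain c where c: "c \<in> nonroots S" "par S c = t" by blast
    have "(par S ^^ Suc k) c = j0" using k c by (simp add: funpow_Suc_right del: funpow.simps)
    moreover have "\<forall>i\<le>Suc k. (par S ^^ i) c \<in> nonroots S"
    proof (intro allI impI)
      fix i assume "i \<le> Suc k"
      then show "(par S ^^ i) c \<in> nonroots S"
        using c k by (cases i) (auto simp: funpow_Suc_right simp del: funpow.simps)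
    qed
    ultimately have "c \<in> Y" using c unfolding Y_def by blast
    then have "depth S c \<le> depth S t" by (rule max)
    moreover have "depth S c = Suc (depth S t)" using depth_par[OF R c(1)] c by simp
    ultimately show False by simp
  qed
  then have "nbrs S t = {par S t}" using t by (auto simp: nbrs_def)
  then have "t \<in> tnodes S" using t by (auto simp: tnodes_def)
  then show ?thesis using k by blast
qed

lemma par_invariant_funpow:
  assumes "\<And>j. j \<in> nonroots S \<Longrightarrow> g (par S j) = g j" "\<forall>i\<le>k. (par S ^^ i) t \<in> nonroots S"
  shows "g ((par S ^^ k) t) = g t"
  using assms(2)
proof (induction k)
  case (Suc k)
  then have "(par S ^^ k) t \<in> nonroots S" by simp
  then show ?case using Suc assms(1) by fastforce
qed simp

lemma root_has_child:
  assumes "rooted_forest S" "r \<in> roots S"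
  obtains j where "j \<in> nonroots S" "par S j = r"
  using rooted_forestD(6)[OF assms] by (metis (mono_tags, lifting) card_1_singletonE mem_Collect_eq singletonI)

section \<open>Pressures orthogonal to all discrete divergences\<close>

lemma exists_kS_pos:
  assumes S: "setting_ok S" and i: "i \<in> tnodes S"
  obtains \<sigma> where "\<sigma> \<in> Msub S i" "0 < kS S i \<sigma>"
proof -
  note C = setting_okD(3)[OF S]
  have "0 < (\<Sum>\<tau>\<in>Msub S i. kS S i \<tau> * measure lebesgue \<tau>)"
    using coupling_okD(3)[OF C i] set_integral_pc[OF setting_okD(1)[OF S] coupling_okD(1)[OF C i]]
    by (simp add: B_def)
  then obtain \<sigma> where "\<sigma> \<in> Msub S i" "kS S i \<sigma> \<noteq> 0" by (metis (no_types, lifting) mult_eq_0_iff not_less_iff_gr_or_eq sum.neutral)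
  then show thesis using that coupling_okD(2)[OF C i, of \<sigma>] by simp
qed

lemma divRT_unit_face:
  assumes M: "mesh_ok S" and \<tau>: "\<tau> \<in> elems S"
  shows "divRT S (\<lambda>g. if g = f then 1 else 0) \<tau> * measure lebesgue \<tau> = (if f \<in> fcs S \<tau> then osgn S \<tau> f else 0)"
proof -
  have fin: "finite (fcs S \<tau>)" using finite_subset[OF mesh_okD(7)[OF M \<tau>] mesh_okD(2)[OF M]] .
  have "(\<Sum>g\<in>fcs S \<tau>. Qf S \<tau> g (\<lambda>g. if g = f then 1 else 0)) = (\<Sum>g\<in>fcs S \<tau>. if f = g then osgn S \<tau> f else 0)"
    by (rule sum.cong) (auto simp: Qf_def)
  then show ?thesis using fin mesh_okD(4)[OF M \<tau>] by (simp add: divRT_def)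
qed

lemma div_orth_const_across_face:
  fixes S :: "('a::euclidean_space, 'f, 'n) setting"
  assumes S: "setting_ok S" and h: "\<forall>v\<in>Hh0 S. ipB S (emb S p) (emb S (divB S v)) = 0"
    and \<tau>: "\<tau>1 \<in> elems S" "\<tau>2 \<in> elems S" "\<tau>1 \<noteq> \<tau>2" "f \<in> fcs S \<tau>1" "f \<in> fcs S \<tau>2"
  shows "fst p \<tau>1 = fst p \<tau>2"
proof -
  note M = setting_okD(1)[OF S]
  have f: "f \<in> mfaces S" using mesh_okD(7)[OF M \<tau>(1)] \<tau>(4) by blast
  have fin: "finite (cells S f)" using mesh_okD(1)[OF M] by (simp add: cells_def)
  have sub: "{\<tau>1, \<tau>2} \<subseteq> cells S f" using \<tau> by (auto simp: cells_def)
  then have "2 \<le> card (cells S f)" using card_mono[OF fin sub] \<tau>(3) by simp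
  then have c2: "card (cells S f) = 2" using mesh_okD(12)[OF M f] by simp
  then have cells: "cells S f = {\<tau>1, \<tau>2}"
    using sub fin \<tau>(3) by (metis card_2_iff card_subset_eq finite.emptyI finite.insertI)
  define v :: "('a, 'f, 'n) dflux" where "v = (\<lambda>g. if g = f then 1 else 0, 0, 0)"
  have "f \<notin> bfaces S" using c2 by (simp add: bfaces_def)
  then have "v \<in> Hh0 S" using f by (auto simp: Hh0_def v_def)
  then have "0 = ipB S (emb S p) (emb S (divB S v))" using h by simp
  also have "\<dots> = (\<Sum>\<tau>\<in>elems S. fst p \<tau> * (divRT S (\<lambda>g. if g = f then 1 else 0) \<tau> * measure lebesgue \<tau>))"
    unfolding ipB_emb_eq[OF M] divB_eq[OF S] v_def by (simp add: mult.assoc flx_def cong: if_cong)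
  also have "\<dots> = (\<Sum>\<tau>\<in>elems S. if f \<in> fcs S \<tau> then fst p \<tau> * osgn S \<tau> f else 0)"
    by (rule sum.cong) (simp_all add: divRT_unit_face[OF M])
  also have "\<dots> = (\<Sum>\<tau>\<in>cells S f. fst p \<tau> * osgn S \<tau> f)"
    unfolding cells_def using mesh_okD(1)[OF M] by (simp add: sum.inter_filter)
  also have "\<dots> = osgn S \<tau>1 f * (fst p \<tau>1 - fst p \<tau>2)"
    using mesh_okD(13)[OF M f, of \<tau>1 \<tau>2] cells \<tau>(3) by (simp add: algebra_simps)
  finally show ?thesis using mesh_okD(8)[OF M \<tau>(1,4)] by auto
qed

lemma div_orth_const_on_elems:
  assumes S: "setting_ok S" and h: "\<forall>v\<in>Hh0 S. ipB S (emb S p) (emb S (divB S v)) = 0"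
    and \<tau>: "\<tau>0 \<in> elems S" "\<tau> \<in> elems S"
  shows "fst p \<tau> = fst p \<tau>0"
  using mesh_okD(14)[OF setting_okD(1)[OF S] \<tau>]
proof (induction rule: rtrancl_induct)
  case (step b c)
  then obtain f where "b \<in> elems S" "c \<in> elems S" "f \<in> fcs S b" "f \<in> fcs S c" by blast
  then show ?case using div_orth_const_across_face[OF S h, of b c f] step.IH by (cases "b = c") auto
qed simp

lemma div_orth_terminal_eq_elem:
  fixes S :: "('a::euclidean_space, 'f, 'n) setting"
  assumes S: "setting_ok S" and h: "\<forall>v\<in>Hh0 S. ipB S (emb S p) (emb S (divB S v)) = 0"
    and i: "i \<in> tnodes S" and \<sigma>: "\<sigma> \<in> Msub S i" and k: "0 < kS S i \<sigma>"
  shows "snd p i = fst p \<sigma>"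
proof -
  note M = setting_okD(1)[OF S]
  let ?c = "kS S i \<sigma> * measure lebesgue \<sigma>"
  have \<sigma>E: "\<sigma> \<in> elems S" using coupling_okD(1)[OF setting_okD(3)[OF S] i] \<sigma> by blast
  have iN: "i \<in> nodes S - droots S"
    using i rooted_forestD(2)[OF setting_okD(2)[OF S]] by (auto simp: tnodes_def)
  define v :: "('a, 'f, 'n) dflux" where "v = (0, 0(i := 0(\<sigma> := 1)), 0)"
  have "v \<in> Hh0 S" using i \<sigma> by (auto simp: Hh0_def v_def)
  moreover have "divB S v = (0(\<sigma> := - kS S i \<sigma>), 0(i := ?c))"
    using i \<sigma> finite_tnodes[OF S] finite_Msub[OF S]
    by (auto simp: divB_eq[OF S] v_def fun_eq_iff if_distribR if_distrib[of "(*) _"]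
        if_distrib[of "\<lambda>x. x * _"] cong: if_cong)
  ultimately have "0 = ipB S (emb S p) (emb S (0(\<sigma> := - kS S i \<sigma>), 0(i := ?c)))"
    using h by metis
  also have "\<dots> = ?c * (snd p i - fst p \<sigma>)"
    using \<sigma>E iN mesh_okD(1)[OF M] rooted_forestD(1)[OF setting_okD(2)[OF S]]
    by (simp add: ipB_emb_eq[OF M] if_distrib[of "(*) _"] if_distrib[of "\<lambda>x. x * _"] algebra_simps
        cong: if_cong)
  finally show ?thesis using k mesh_okD(4)[OF M \<sigma>E] by simp
qed

lemma parent_edge_in_edges: "j \<in> nonroots S \<Longrightarrow> (par S j, j) \<in> edges S"
  by (auto simp: edges_def)

lemma reversed_parent_edge_notin_edges:
  assumes R: "rooted_forest S" and j: "j \<in> nonroots S"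
  shows "(j, par S j) \<notin> edges S"
proof
  assume "(j, par S j) \<in> edges S"
  then have "par S j \<in> nonroots S" "par S (par S j) = j" by (auto simp: edges_def)
  then show False using par_par_neq_self[OF R j] by blast
qed

lemma terminal_not_parent:
  assumes R: "rooted_forest S" and i: "i \<in> tnodes S" and j: "j \<in> nonroots S"
  shows "par S j \<noteq> i"
proof
  assume ij: "par S j = i"
  have iN: "i \<in> nonroots S" using i by (auto simp: tnodes_def)
  have "j \<noteq> par S i" using par_par_neq_self[OF R j] iN ij by auto
  moreover have "{j, par S i} \<subseteq> nbrs S i" using iN j ij by (auto simp: nbrs_def)
  moreover have "finite (nbrs S i)" using rooted_forestD(1)[OF R] by (auto simp: nbrs_def)
  ultimately have "2 \<le> card (nbrs S i)" by (metis card_2_iff card_mono)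
  then show False using i by (simp add: tnodes_def)
qed

lemma flx_unit_edge:
  assumes R: "rooted_forest S" and j: "j \<in> nonroots S"
  shows "flx S (0((par S j, j) := 1)) k i
           = (if k = par S j \<and> i = j then 1 else 0) - (if i = par S j \<and> k = j then 1 else 0)"
  using parent_edge_in_edges[OF j] reversed_parent_edge_notin_edges[OF R j] par_neq_self[OF R j]
  unfolding flx_def by auto

lemma divB_unit_edge:
  fixes S :: "('a::euclidean_space, 'f, 'n) setting"
  assumes S: "setting_ok S" and j: "j \<in> nonroots S"
  shows "divB S (0, 0, 0((par S j, j) := 1))
           = (0, \<lambda>i. (if i = par S j then 1 else 0) - (if i = j then 1 else 0))"
proof -
  note R = setting_okD(2)[OF S]
  have fin: "finite (nbrs S i)" for i using rooted_forestD(1)[OF R] by (auto simp: nbrs_def)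
  have "par S j \<in> nbrs S j" "j \<in> nbrs S (par S j)" using j by (auto simp: nbrs_def)
  then have "(\<Sum>k\<in>nbrs S i. flx S (0((par S j, j) := 1)) k i)
               = (if i = j then 1 else 0) - (if i = par S j then 1 else 0)" for i
    using fin[of i] par_neq_self[OF R j]
    by (cases "i = j"; cases "i = par S j") (simp_all add: flx_unit_edge[OF R j] sum_subtractf sum_negf)
  then show ?thesis
    using terminal_not_parent[OF R _ j] flx_unit_edge[OF R j] par_neq_self[OF R j]
    by (auto simp: divB_eq[OF S] fun_eq_iff)
qed

lemma div_orth_const_along_edge:
  fixes S :: "('a::euclidean_space, 'f, 'n) setting"
  assumes S: "setting_ok S" and p: "p \<in> Lh S"
    and h: "\<forall>v\<in>Hh0 S. ipB S (emb S p) (emb S (divB S v)) = 0"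
    and j: "j \<in> nonroots S"
  shows "snd p (par S j) = snd p j"
proof -
  define v :: "('a, 'f, 'n) dflux" where "v = (0, 0, 0((par S j, j) := 1))"
  have "v \<in> Hh0 S" using parent_edge_in_edges[OF j] by (auto simp: Hh0_def v_def)
  then have "0 = ipB S (emb S p) (emb S (divB S v))" using h by simp
  also have "\<dots> = (\<Sum>i\<in>nodes S - droots S. snd p i * ((if i = par S j then 1 else 0) - (if i = j then 1 else 0)))"
    unfolding v_def divB_unit_edge[OF S j] ipB_emb_eq[OF setting_okD(1)[OF S]] by simp
  also have "\<dots> = snd p (par S j) - snd p j"
    using p rooted_forestD(1)[OF setting_okD(2)[OF S]]
    by (auto simp: right_diff_distrib sum_subtractf if_distrib[of "(*) _"] Lh_def cong: if_cong)
  finally show ?thesis by simp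
qed

lemma div_orth_imp_zero:
  assumes S: "setting_ok S" and p: "p \<in> Lh S"
    and h: "\<forall>v\<in>Hh0 S. ipB S (emb S p) (emb S (divB S v)) = 0"
  shows "p = 0"
proof -
  note R = setting_okD(2)[OF S]
  have edge: "snd p (par S j) = snd p j" if "j \<in> nonroots S" for j
    using div_orth_const_along_edge[OF S p h that] .
  have terminal: "\<exists>\<sigma>\<in>elems S. snd p t = fst p \<sigma>" if t: "t \<in> tnodes S" for t
  proof -
    obtain \<sigma> where "\<sigma> \<in> Msub S t" "0 < kS S t \<sigma>" using exists_kS_pos[OF S t] .
    then show ?thesis
      using div_orth_terminal_eq_elem[OF S h t] coupling_okD(1)[OF setting_okD(3)[OF S] t] by blast
  qed
  have up: "\<exists>t\<in>tnodes S. snd p t = snd p j" if "j \<in> nonroots S" for j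
    using exists_terminal_descendant[OF R that] par_invariant_funpow[of S "snd p", OF edge] by metis
  obtain r where r: "r \<in> droots S" using rooted_forestD(3)[OF R] by blast
  then have "snd p r = 0" using p by (auto simp: Lh_def)
  obtain j0 where "j0 \<in> nonroots S" "par S j0 = r"
    using root_has_child[OF R] r rooted_forestD(2)[OF R] by blast
  then obtain t0 where "t0 \<in> tnodes S" "snd p t0 = 0" using up edge \<open>snd p r = 0\<close> by metis
  then obtain \<sigma>0 where \<sigma>0: "\<sigma>0 \<in> elems S" "fst p \<sigma>0 = 0" using terminal by metis
  have fst0: "fst p \<tau> = 0" for \<tau>
    using div_orth_const_on_elems[OF S h \<sigma>0(1), of \<tau>] \<sigma>0(2) p by (cases "\<tau> \<in> elems S") (auto simp: Lh_def)
  have nonroot0: "snd p j = 0" if "j \<in> nonroots S" for j using up[OF that] terminal fst0 by metis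
  have snd0: "snd p i = 0" for i
  proof (cases "i \<in> roots S")
    case True
    then obtain j where "j \<in> nonroots S" "par S j = i" using root_has_child[OF R] by blast
    then show ?thesis using edge nonroot0 by metis
  next
    case False
    then show ?thesis using nonroot0 p by (cases "i \<in> nodes S") (auto simp: Lh_def)
  qed
  show ?thesis using fst0 snd0 by (simp add: prod_eq_iff fun_eq_iff)
qed

lemma lumped_Dh_pos:
  assumes S: "setting_ok S" and p: "p \<in> Lh S" "p \<noteq> 0"
  shows "0 < lumped S (Dh S p) (Dh S p)"
proof -
  have "Dh S p \<noteq> 0"
  proof
    assume "Dh S p = 0"
    then have "\<forall>v\<in>Hh0 S. ipB S (emb S p) (emb S (divB S v)) = 0"
      using Dh_char(2)[OF S, of _ p] bilinear_lzero[OF bilinear_lumped[OF S]] by simp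
    then show False using div_orth_imp_zero[OF S p(1)] p(2) by blast
  qed
  then show ?thesis using lumped_pos[OF S Dh_char(1)[OF S]] by blast
qed

theorem theorem4p6:
  fixes S :: "('a::euclidean_space, 'f, 'n) setting"
    and rD :: "'a \<Rightarrow> real" and rN :: "'n \<Rightarrow> real"
  assumes "setting_ok S"
    and "L2Omega S rD"
  shows "\<exists>!p. p \<in> Lh S \<and>
           (\<forall>w \<in> Lh S. lumped S (Dh S p) (Dh S w) = ipB S (rD, rN) (emb S w))"
proof (rule riesz_representation_finitely_spanned)
  show "finitely_spanned (Lh S)" using assms(1) by (rule finitely_spanned_Lh)
  show "bilinear (\<lambda>p w. lumped S (Dh S p) (Dh S w))"
    using bilinear_lumped[OF assms(1)] linear_Dh[OF assms(1)] by (rule bilinear_compose_linear)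
  show "lumped S (Dh S p) (Dh S w) = lumped S (Dh S w) (Dh S p)" for p w
    using assms(1) by (rule lumped_commute)
  show "0 < lumped S (Dh S p) (Dh S p)" if "p \<in> Lh S" "p \<noteq> 0" for p
    using lumped_Dh_pos[OF assms(1) that] .
  show "linear (\<lambda>w. ipB S (rD, rN) (emb S w))" using assms by (rule linear_ipB_source)
qed

end
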